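(* Let $d\ge2$, $j\in[d-1]$, $R$ an abelian group, and let $\mathcal S$ be the support of a $j$-cocycle $f$ (with coefficients in $R$) in a $d$-dimensional simplicial complex $\mathcal G$. For a simplex $K$ let $\mathcal S_K$ denote the set of $j$-simplices of $\mathcal S$ contained in $K$. Then for each $k$ with $j+1\le k\le d$ and each $k$-simplex $K$ of $\mathcal G$: (i) either $\mathcal S_K=\emptyset$, or both $|\mathcal S_K|\ge k-j+1$ and $\bigcup_{\sigma\in\mathcal S_K}\sigma=K$; (ii) if $|\mathcal S_K|=k-j+1$, then $\mathcal S_K$ forms a $j$-flower in $K$.
   Context: A $j$-cochain assigns to each ordered $j$-simplex a value in $R$, changing sign under swapping two vertices; its support is the set of unordered $j$-simplices with nonzero value; it is a $j$-cocycle if $\sum_{i=0}^{j+1}(-1)^if([v_0,\dots,\hat v_i,\dots,v_{j+1}])=0_R$ for every ordered $(j+1)$-simplex $[v_0,\dots,v_{j+1}]$. $i$-simplices are members of size $i+1$; $d$-dimensional means no $(d+1)$-simplices. Given a $k$-simplex $K$ with $j\le k\le d$, a collection $\{P_0,\dots,P_{k-j}\}$ of $j$-simplices forms a $j$-flower in $K$ if $K=\bigcup_iP_i$ and there is a set $C$ with $|C|=j$ contained in every $P_i$. *)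

theory Defs
  imports Main
begin

definition simplicial_complex :: "'v set set \<Rightarrow> bool" where
  "simplicial_complex G \<longleftrightarrow>
     (\<forall>\<sigma>\<in>G. finite \<sigma> \<and> \<sigma> \<noteq> {}) \<and>
     (\<forall>\<sigma>\<in>G. \<forall>\<tau>. \<tau> \<subseteq> \<sigma> \<and> \<tau> \<noteq> {} \<longrightarrow> \<tau> \<in> G)"

definition simplex :: "'v set set \<Rightarrow> nat \<Rightarrow> 'v set \<Rightarrow> bool" where
  "simplex G i \<sigma> \<longleftrightarrow> \<sigma> \<in> G \<and> card \<sigma> = i + 1"

definition dimensional :: "'v set set \<Rightarrow> nat \<Rightarrow> bool" where
  "dimensional G d \<longleftrightarrow> \<not> (\<exists>\<sigma>. simplex G (d + 1) \<sigma>)"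

definition ordered_simplex :: "'v set set \<Rightarrow> nat \<Rightarrow> 'v list \<Rightarrow> bool" where
  "ordered_simplex G i xs \<longleftrightarrow> distinct xs \<and> length xs = i + 1 \<and> set xs \<in> G"

definition swap_pos :: "'v list \<Rightarrow> nat \<Rightarrow> nat \<Rightarrow> 'v list" where
  "swap_pos xs a b = xs[a := xs ! b, b := xs ! a]"

definition del_pos :: "'v list \<Rightarrow> nat \<Rightarrow> 'v list" where
  "del_pos xs i = take i xs @ drop (Suc i) xs"

definition cochain :: "'v set set \<Rightarrow> nat \<Rightarrow> ('v list \<Rightarrow> 'r::ab_group_add) \<Rightarrow> bool" where
  "cochain G j f \<longleftrightarrow>
     (\<forall>xs a b. ordered_simplex G j xs \<and> a < length xs \<and> b < length xs \<and> a \<noteq> b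
        \<longrightarrow> f (swap_pos xs a b) = - f xs)"

definition support :: "'v set set \<Rightarrow> nat \<Rightarrow> ('v list \<Rightarrow> 'r::ab_group_add) \<Rightarrow> 'v set set" where
  "support G j f = {set xs | xs. ordered_simplex G j xs \<and> f xs \<noteq> 0}"

definition cocycle :: "'v set set \<Rightarrow> nat \<Rightarrow> ('v list \<Rightarrow> 'r::ab_group_add) \<Rightarrow> bool" where
  "cocycle G j f \<longleftrightarrow> cochain G j f \<and>
     (\<forall>vs. ordered_simplex G (j + 1) vs \<longrightarrow>
        (\<Sum>i\<in>{0..j+1}. (if even i then f (del_pos vs i) else - f (del_pos vs i))) = 0)"

text \<open>j-flower in a k-simplex K (k = card K - 1): a collection of k-j+1 j-simplices
  whose union is K and which all contain a common j-set C.\<close>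
definition j_flower :: "nat \<Rightarrow> 'v set \<Rightarrow> 'v set set \<Rightarrow> bool" where
  "j_flower j K P \<longleftrightarrow>
     finite P \<and> card P = card K - j \<and>
     (\<forall>p\<in>P. finite p \<and> card p = j + 1) \<and>
     \<Union>P = K \<and> (\<exists>C. finite C \<and> card C = j \<and> (\<forall>p\<in>P. C \<subseteq> p))"

end

theory Submission
  imports Defs
begin

text \<open>Let \<sigma> be in the support and v a vertex of K outside \<sigma>. The cocycle identity on the
  (j+1)-simplex v\<sigma> contains the nonzero term f(\<sigma>), so some other term, a face v(\<sigma> - u),
  is nonzero too: the support inside K is closed under exchanging one vertex for any
  vertex of K. This exchange property alone forces the claims. The faces obtained from \<sigma>
  by one exchange per vertex v of K - \<sigma> are pairwise distinct (the only vertex of K - \<sigma> in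
  such a face is v), which gives |S_K| \<ge> |K - \<sigma>| + 1 = k - j + 1 and \<Union>S_K = K. If equality
  holds, S_K consists of \<sigma> and these faces only, and exchanging w into the face for v
  must give the face for w; so the removed vertex u does not depend on v, and
  C = \<sigma> - u is the common core of a flower.\<close>

lemma del_pos_distinct:
  assumes "distinct xs" "n < length xs"
  shows "set (del_pos xs n) = set xs - {xs ! n}" "distinct (del_pos xs n)"
    "length (del_pos xs n) = length xs - 1"
proof -
  have xs: "xs = take n xs @ xs ! n # drop (Suc n) xs"
    using assms(2) by (simp add: id_take_nth_drop)
  with assms(1) have dist: "distinct (take n xs @ xs ! n # drop (Suc n) xs)" by metis
  then show "set (del_pos xs n) = set xs - {xs ! n}"
    unfolding del_pos_def by (subst (3) xs) auto
  show "distinct (del_pos xs n)" unfolding del_pos_def using dist by auto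
  show "length (del_pos xs n) = length xs - 1"
    unfolding del_pos_def using assms(2) by simp
qed

lemma del_pos_Cons_0 [simp]: "del_pos (x # xs) 0 = xs"
  by (simp add: del_pos_def)

lemma del_pos_Cons_Suc [simp]: "del_pos (x # xs) (Suc i) = x # del_pos xs i"
  by (simp add: del_pos_def)

lemma card_support:
  assumes "\<sigma> \<in> support G j f"
  shows "card \<sigma> = j + 1"
  using assms unfolding support_def ordered_simplex_def by (auto simp: distinct_card)

lemma cocycle_nonzero_cone_face:
  assumes "cocycle G j f" "ordered_simplex G (j + 1) (v # xs)" "f xs \<noteq> 0"
  shows "\<exists>i < length xs. f (v # del_pos xs i) \<noteq> 0"
proof (rule ccontr)
  assume all_zero: "\<not> ?thesis"
  have len: "length xs = j + 1" using assms(2) by (simp add: ordered_simplex_def)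
  have "0 = (\<Sum>i = 0..j + 1. if even i then f (del_pos (v # xs) i) else - f (del_pos (v # xs) i))"
    using assms(1,2) unfolding cocycle_def by simp
  also have "\<dots> = f xs"
    unfolding Suc_eq_plus1[symmetric] sum.atLeast0_atMost_Suc_shift
    using all_zero len by (auto intro!: sum.neutral)
  finally show False using assms(3) by simp
qed

lemma support_exchange:
  assumes G: "simplicial_complex G" and f: "cocycle G j f"
    and \<sigma>: "\<sigma> \<in> support G j f" and v: "v \<notin> \<sigma>" "insert v \<sigma> \<in> G"
  shows "\<exists>u\<in>\<sigma>. insert v (\<sigma> - {u}) \<in> support G j f"
proof -
  obtain xs where xs: "\<sigma> = set xs" "ordered_simplex G j xs" "f xs \<noteq> 0"
    using \<sigma> unfolding support_def by auto
  have dist: "distinct xs" and len: "length xs = j + 1"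
    using xs(2) by (auto simp: ordered_simplex_def)
  have face: "\<tau> \<in> G" if "\<tau> \<subseteq> insert v \<sigma>" "\<tau> \<noteq> {}" for \<tau>
    using G v(2) that unfolding simplicial_complex_def by blast
  have "ordered_simplex G (j + 1) (v # xs)"
    unfolding ordered_simplex_def using dist len xs(1) v face by auto
  then obtain i where i: "i < length xs" "f (v # del_pos xs i) \<noteq> 0"
    using cocycle_nonzero_cone_face[OF f _ xs(3)] by blast
  note del = del_pos_distinct[OF dist i(1)]
  have set_eq: "set (v # del_pos xs i) = insert v (\<sigma> - {xs ! i})"
    using del(1) xs(1) by simp
  have "ordered_simplex G j (v # del_pos xs i)"
    unfolding ordered_simplex_def using del len v xs(1) set_eq face[of "insert v (\<sigma> - {xs ! i})"]
    by auto
  with i(2) have "insert v (\<sigma> - {xs ! i}) \<in> support G j f"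
    unfolding support_def set_eq[symmetric] by blast
  moreover have "xs ! i \<in> \<sigma>" using i(1) xs(1) by simp
  ultimately show ?thesis by blast
qed

definition exchange_star :: "'v set \<Rightarrow> 'v set \<Rightarrow> ('v \<Rightarrow> 'v) \<Rightarrow> 'v set set" where
  "exchange_star K \<sigma> u = insert \<sigma> ((\<lambda>v. insert v (\<sigma> - {u v})) ` (K - \<sigma>))"

lemma exchange_face_outside_iff:
  assumes "v \<in> K - \<sigma>" "w \<in> K - \<sigma>"
  shows "w \<in> insert v (\<sigma> - {u v}) \<longleftrightarrow> w = v"
  using assms by auto

lemma card_exchange_star:
  assumes "finite K"
  shows "card (exchange_star K \<sigma> u) = card (K - \<sigma>) + 1"
proof -
  have "inj_on (\<lambda>v. insert v (\<sigma> - {u v})) (K - \<sigma>)"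
    by (rule inj_onI) (metis exchange_face_outside_iff insertI1)
  moreover have "\<sigma> \<notin> (\<lambda>v. insert v (\<sigma> - {u v})) ` (K - \<sigma>)" by blast
  ultimately show ?thesis
    unfolding exchange_star_def using assms by (simp add: card_image)
qed

locale exchange_family =
  fixes K :: "'v set" and S :: "'v set set" and j :: nat
  assumes finite_K: "finite K"
    and subset_K: "\<sigma> \<in> S \<Longrightarrow> \<sigma> \<subseteq> K"
    and card_member: "\<sigma> \<in> S \<Longrightarrow> card \<sigma> = j + 1"
    and exchange: "\<sigma> \<in> S \<Longrightarrow> v \<in> K - \<sigma> \<Longrightarrow> \<exists>u\<in>\<sigma>. insert v (\<sigma> - {u}) \<in> S"
begin

lemma finite_S: "finite S"
  by (rule finite_subset[of _ "Pow K"]) (use finite_K subset_K in auto)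

lemma obtain_exchange_star:
  assumes "\<sigma> \<in> S"
  obtains u where "\<And>v. v \<in> K - \<sigma> \<Longrightarrow> u v \<in> \<sigma>" "exchange_star K \<sigma> u \<subseteq> S"
proof -
  obtain u where "\<And>v. v \<in> K - \<sigma> \<Longrightarrow> u v \<in> \<sigma> \<and> insert v (\<sigma> - {u v}) \<in> S"
    using exchange[OF assms] by metis
  then show ?thesis using that assms unfolding exchange_star_def by blast
qed

lemma card_exchange_star_of_member:
  assumes "\<sigma> \<in> S"
  shows "card (exchange_star K \<sigma> u) = card K - j"
proof -
  have "card \<sigma> \<le> card K" using card_mono[OF finite_K subset_K[OF assms]] .
  moreover have "card (K - \<sigma>) = card K - card \<sigma>"
    using card_Diff_subset[OF finite_subset[OF subset_K finite_K] subset_K] assms by simp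
  ultimately show ?thesis
    using card_exchange_star[OF finite_K] card_member[OF assms] by simp
qed

lemma Union_eq:
  assumes "S \<noteq> {}"
  shows "\<Union>S = K"
proof
  show "\<Union>S \<subseteq> K" using subset_K by blast
  obtain \<sigma> where "\<sigma> \<in> S" using assms by blast
  then show "K \<subseteq> \<Union>S" using exchange by blast
qed

lemma card_ge:
  assumes "S \<noteq> {}"
  shows "card K - j \<le> card S"
proof -
  obtain \<sigma> where \<sigma>: "\<sigma> \<in> S" using assms by blast
  then obtain u where "exchange_star K \<sigma> u \<subseteq> S" by (rule obtain_exchange_star)
  then show ?thesis using card_mono[OF finite_S] card_exchange_star_of_member[OF \<sigma>] by metis
qed

lemma exchange_uniform:
  assumes \<sigma>: "\<sigma> \<in> S" and u: "\<And>v. v \<in> K - \<sigma> \<Longrightarrow> u v \<in> \<sigma>"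
    and S_eq: "S = exchange_star K \<sigma> u"
    and v: "v \<in> K - \<sigma>" and w: "w \<in> K - \<sigma>"
  shows "u v = u w"
proof (cases "v = w")
  case False
  let ?\<tau> = "\<lambda>v. insert v (\<sigma> - {u v})"
  have "?\<tau> v \<in> S" using S_eq v unfolding exchange_star_def by blast
  moreover have "w \<notin> ?\<tau> v" using False v w by blast
  ultimately obtain x where "insert w (?\<tau> v - {x}) \<in> S"
    using exchange w by blast
  moreover have "insert w (?\<tau> v - {x}) \<noteq> \<sigma>" using w by blast
  ultimately obtain z where z: "z \<in> K - \<sigma>" "insert w (?\<tau> v - {x}) = ?\<tau> z"
    unfolding S_eq exchange_star_def by blast
  have "z = w" using exchange_face_outside_iff[OF z(1) w] z(2) by blast
  with z(2) have \<rho>_eq: "insert w (?\<tau> v - {x}) = ?\<tau> w" by simp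
  have "x = v"
  proof (rule ccontr)
    assume "x \<noteq> v"
    then have "v \<in> ?\<tau> w" unfolding \<rho>_eq[symmetric] by blast
    then show False using exchange_face_outside_iff[OF w v] False by blast
  qed
  moreover have "insert v (\<sigma> - {u v}) - {v} = \<sigma> - {u v}" using v by blast
  ultimately have "insert w (\<sigma> - {u v}) = insert w (\<sigma> - {u w})" using \<rho>_eq by simp
  then have "\<sigma> - {u v} = \<sigma> - {u w}" using w by (simp add: insert_ident)
  then show ?thesis using u[OF v] u[OF w] by blast
qed simp

lemma j_flower_of_card_eq:
  assumes "card S = card K - j" "j + 1 < card K"
  shows "j_flower j K S"
proof -
  have "S \<noteq> {}" using assms by auto
  then obtain \<sigma> where \<sigma>: "\<sigma> \<in> S" by blast
  obtain u where u: "\<And>v. v \<in> K - \<sigma> \<Longrightarrow> u v \<in> \<sigma>" and star: "exchange_star K \<sigma> u \<subseteq> S"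
    using obtain_exchange_star[OF \<sigma>] by blast
  have S_eq: "S = exchange_star K \<sigma> u"
    using card_subset_eq[OF finite_S star] card_exchange_star_of_member[OF \<sigma>] assms(1) by simp
  have "K - \<sigma> \<noteq> {}" using assms(2) card_member[OF \<sigma>] subset_K[OF \<sigma>] by auto
  then obtain v0 where v0: "v0 \<in> K - \<sigma>" by blast
  define C where "C = \<sigma> - {u v0}"
  have "C \<subseteq> p" if "p \<in> S" for p
    using that exchange_uniform[OF \<sigma> u S_eq _ v0]
    unfolding S_eq exchange_star_def C_def by auto
  moreover have "finite C" "card C = j"
    unfolding C_def using u[OF v0] card_member[OF \<sigma>] finite_subset[OF subset_K[OF \<sigma>] finite_K]
    by auto
  moreover have "\<forall>p\<in>S. finite p \<and> card p = j + 1"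
    using card_member subset_K finite_K by (auto intro: finite_subset)
  moreover have "\<Union>S = K" using Union_eq \<open>S \<noteq> {}\<close> .
  ultimately show ?thesis unfolding j_flower_def using assms(1) finite_S by blast
qed

end

lemma exchange_family_support:
  assumes G: "simplicial_complex G" and f: "cocycle G j f" and K: "K \<in> G"
  shows "exchange_family K {\<sigma> \<in> support G j f. \<sigma> \<subseteq> K} j"
proof
  show "finite K" using G K unfolding simplicial_complex_def by blast
next
  fix \<sigma> v assume \<sigma>: "\<sigma> \<in> {\<sigma> \<in> support G j f. \<sigma> \<subseteq> K}" and v: "v \<in> K - \<sigma>"
  have "insert v \<sigma> \<subseteq> K" using \<sigma> v by blast
  then have "insert v \<sigma> \<in> G"
    using G K unfolding simplicial_complex_def by (meson insert_not_empty)
  then obtain u where "u \<in> \<sigma>" "insert v (\<sigma> - {u}) \<in> support G j f"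
    using support_exchange[OF G f] \<sigma> v by blast
  with \<sigma> v show "\<exists>u\<in>\<sigma>. insert v (\<sigma> - {u}) \<in> {\<sigma> \<in> support G j f. \<sigma> \<subseteq> K}" by blast
qed (auto simp: card_support)

theorem lemma4p10:
  fixes G :: "'v set set" and f :: "'v list \<Rightarrow> 'r::ab_group_add"
    and d j k :: nat and K :: "'v set"
  assumes "simplicial_complex G" and "dimensional G d" and "d \<ge> 2"
    and "1 \<le> j" and "j \<le> d - 1"
    and "cocycle G j f"
    and "j + 1 \<le> k" and "k \<le> d" and "simplex G k K"
  shows "(let SK = {\<sigma> \<in> support G j f. \<sigma> \<subseteq> K} in
           (SK = {} \<or> (card SK \<ge> k - j + 1 \<and> \<Union>SK = K)) \<and>
           (card SK = k - j + 1 \<longrightarrow> j_flower j K SK))"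
proof -
  define SK where "SK = {\<sigma> \<in> support G j f. \<sigma> \<subseteq> K}"
  have K: "K \<in> G" "card K = k + 1" using assms(9) by (auto simp: simplex_def)
  interpret exchange_family K SK j
    unfolding SK_def by (rule exchange_family_support[OF assms(1,6) K(1)])
  have "card K - j = k - j + 1" "j + 1 < card K" using K(2) assms(7) by simp_all
  then show ?thesis
    unfolding SK_def[symmetric] Let_def using Union_eq card_ge j_flower_of_card_eq by auto
qed

end
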